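(* Fix $\alpha,\beta\in(0,1)$ and $0<c<1/2$. There exist constants $C_\beta>0$ (depending only on $\beta$) and $K,L>0$ (depending only on $\alpha,\beta,c$) such that for the decoupled process with parameters $(\mathcal{P}_\infty,v_0,\mathcal{P}_\infty,\alpha,\beta)$ and all $t$, with probability at least $1-e^{-(1+o(1))t^{2c}}$ (the $o(1)$ tending to $0$ as $t\to\infty$) there exist indices $k_0<k_1<\dots<k_l$ with $l\ge L\,t^{0.5-c}$ such that the values $\sigma_{k_0}(t),\dots,\sigma_{k_l}(t)$ are pairwise distinct and, for each $i=0,1,\dots,l$, $$\big|\sigma_{k_i}(t)-\beta t-C_\beta\, t^{c}\sqrt{t}\, i\big|\le K\,t^{c}\sqrt{t}.$$
   Context: Decoupled process on the infinite path $\mathcal{P}_\infty$ with vertices $v_0\to v_1\to\cdots$, root $v_0$, $p(v_i)=v_{i-1}$. Fix $\alpha,\beta\in[0,1]$. Let $Z_0=+1$, $Z_1,Z_2,\dots$ i.i.d. uniform on $\{-1,+1\}$, $Z_\infty=\bot$; counter $\mathrm{count}_0=1$; $\mathrm{origin}_0(v_0)=0$ (and always $0$), $\mathrm{origin}_0(v_i)=\infty$ for $i\ge1$; $g_t(v)=Z_{\mathrm{origin}_t(v)}$. Update from $t$ to $t+1$ (independent choices): if $g_t(v)=g_t(p(v))=\bot$ then $\mathrm{origin}_{t+1}(v)=\infty$; if $g_t(v)=\bot\ne g_t(p(v))$: w.p. $1-\alpha$, $\mathrm{origin}_{t+1}(v)=\mathrm{origin}_t(p(v))$, and w.p. $\alpha$,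 $\mathrm{origin}_{t+1}(v)$ is the current counter value and the counter is incremented; if $g_t(v)\ne\bot$, $v\neq v_0$: w.p. $\beta$, $\mathrm{origin}_{t+1}(v)=\mathrm{origin}_t(p(v))$, otherwise unchanged. $k$-frontier: $\sigma_k(t)=\max\{i\in\mathbb{N}:\mathrm{origin}_t(v_i)\le k\}$. *)

theory Defs
  imports "HOL-Probability.Probability"
begin

text \<open>Decoupled process on the infinite path v_0 -> v_1 -> ..., vertex v_i encoded by i,
  parent of i (i >= 1) is i - 1. Origins: None encodes infinity.
  Randomness: A (t,i) = "new label" coin (prob alpha), B (t,i) = "copy parent" coin
  (prob beta), Z j = sign Z_j (True = +1) for j >= 1.\<close>

type_synonym dp_omega = "((nat \<times> nat \<Rightarrow> bool) \<times> (nat \<times> nat \<Rightarrow> bool) \<times> (nat \<Rightarrow> bool))"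

definition Zsign :: "(nat \<Rightarrow> bool) \<Rightarrow> nat \<Rightarrow> bool" where
  "Zsign Z j = (if j = 0 then True else Z j)"

definition gval :: "(nat \<Rightarrow> bool) \<Rightarrow> (nat \<Rightarrow> nat option) \<Rightarrow> nat \<Rightarrow> bool option" where
  "gval Z orig v = map_option (Zsign Z) (orig v)"

definition new_label :: "(nat \<times> nat \<Rightarrow> bool) \<Rightarrow> (nat \<Rightarrow> bool) \<Rightarrow> (nat \<Rightarrow> nat option) \<Rightarrow> nat \<Rightarrow> nat \<Rightarrow> bool" where
  "new_label A Z orig t j \<longleftrightarrow>
     1 \<le> j \<and> gval Z orig j = None \<and> gval Z orig (j - 1) \<noteq> None \<and> A (t, j)"

definition step_origin ::
  "(nat \<times> nat \<Rightarrow> bool) \<Rightarrow> (nat \<times> nat \<Rightarrow> bool) \<Rightarrow> (nat \<Rightarrow> bool) \<Rightarrow> nat \<Rightarrow>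
   (nat \<Rightarrow> nat option) \<Rightarrow> nat \<Rightarrow> nat \<Rightarrow> nat option" where
  "step_origin A B Z t orig cnt i =
     (if i = 0 then Some 0
      else if gval Z orig i = None then
        (if gval Z orig (i - 1) = None then None
         else if A (t, i) then Some (cnt + card {j. j < i \<and> new_label A Z orig t j})
         else orig (i - 1))
      else (if B (t, i) then orig (i - 1) else orig i))"

primrec dproc :: "dp_omega \<Rightarrow> nat \<Rightarrow> (nat \<Rightarrow> nat option) \<times> nat" where
  "dproc \<omega> 0 = ((\<lambda>i. if i = 0 then Some 0 else None), 1)"
| "dproc \<omega> (Suc t) =
     (case \<omega> of (A, B, Z) \<Rightarrow>
       (case dproc \<omega> t of (orig, cnt) \<Rightarrow>
          (step_origin A B Z t orig cnt, cnt + card {j. new_label A Z orig t j})))"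

definition origin :: "dp_omega \<Rightarrow> nat \<Rightarrow> nat \<Rightarrow> nat option" where
  "origin \<omega> t = fst (dproc \<omega> t)"

definition frontier :: "dp_omega \<Rightarrow> nat \<Rightarrow> nat \<Rightarrow> nat" where
  "frontier \<omega> k t = Max {i. \<exists>j. origin \<omega> t i = Some j \<and> j \<le> k}"

definition decoupled_space :: "real \<Rightarrow> real \<Rightarrow> dp_omega measure" where
  "decoupled_space \<alpha> \<beta> =
     (PiM UNIV (\<lambda>_::nat \<times> nat. measure_pmf (bernoulli_pmf \<alpha>)))
     \<Otimes>\<^sub>M ((PiM UNIV (\<lambda>_::nat \<times> nat. measure_pmf (bernoulli_pmf \<beta>)))
     \<Otimes>\<^sub>M (PiM UNIV (\<lambda>_::nat. measure_pmf (pmf_of_set (UNIV :: bool set)))))"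

end

theory Submission
  imports Defs "HOL-Real_Asymp.Real_Asymp"
begin

text \<open>On the path, at time t exactly v_0, ..., v_t carry labels and only v_(t+1) can receive a
  fresh one. So a k-frontier sits at the tip until a label larger than k is created there; from then
  on it advances by one exactly when the copy coin of its right neighbour comes up, i.e. it is a lazy
  random walk with step probability \<beta>, and Hoeffding's inequality keeps it within t^c sqrt t of
  its mean except with probability exp(-2 t^(2c)).

  Take about t^(1/2-c) start times spaced 3 t^c sqrt t / (1 - \<beta>) apart. Shortly after each of
  them a fresh label appears (except with probability (1 - \<alpha>)^(t^c sqrt t / 4)), and the
  frontier of the largest label present at the start time then ends near
  \<beta> t + 3 t^c sqrt t i. These positions are separated, hence distinct, and a union bound over
  all blocks bounds the failure probability by exp(-t^(2c)) for large t.\<close>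

section \<open>The process on the path\<close>

fun label_count :: "dp_omega \<Rightarrow> nat \<Rightarrow> nat" where
  "label_count \<omega> 0 = 1"
| "label_count \<omega> (Suc t) = label_count \<omega> t + (if fst \<omega> (t, Suc t) then 1 else 0)"

fun front :: "dp_omega \<Rightarrow> nat \<Rightarrow> nat \<Rightarrow> nat" where
  "front \<omega> k 0 = 0"
| "front \<omega> k (Suc t) =
     (if front \<omega> k t = t then (if fst \<omega> (t, Suc t) \<and> k < label_count \<omega> t then t else Suc t)
      else front \<omega> k t + (if fst (snd \<omega>) (t, Suc (front \<omega> k t)) then 1 else 0))"

lemma front_le: "front \<omega> k t \<le> t"
  by (induction t) auto

lemma label_count_mono: "t \<le> t' \<Longrightarrow> label_count \<omega> t \<le> label_count \<omega> t'"
  by (induction t' rule: dec_induct) auto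

lemma label_count_pos: "1 \<le> label_count \<omega> t"
  using label_count_mono[of 0 t \<omega>] by simp

lemma new_label_on_segment:
  assumes "\<And>i. orig i \<noteq> None \<longleftrightarrow> i \<le> t"
  shows "new_label A Z orig t j \<longleftrightarrow> j = Suc t \<and> A (t, Suc t)"
proof -
  have "1 \<le> j \<and> orig j = None \<and> orig (j - 1) \<noteq> None \<longleftrightarrow> j = Suc t"
    using assms[of j] assms[of "j - 1"] by auto
  then show ?thesis unfolding new_label_def gval_def by auto
qed

lemma step_origin_on_segment:
  assumes "\<And>i. orig i \<noteq> None \<longleftrightarrow> i \<le> t"
  shows "step_origin A B Z t orig cnt i =
    (if i = 0 then Some 0 else if i \<le> t then (if B (t, i) then orig (i - 1) else orig i)
     else if i = Suc t then (if A (t, Suc t) then Some cnt else orig t) else None)"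
proof -
  have "{j. j < i \<and> new_label A Z orig t j} = {}" if "i \<le> Suc t"
    using that new_label_on_segment[OF assms] by auto
  then show ?thesis
    using assms[of i] assms[of "i - 1"] unfolding step_origin_def gval_def by (auto simp: not_le)
qed

lemma dproc_on_segment:
  "snd (dproc \<omega> t) = label_count \<omega> t \<and> (\<forall>i. origin \<omega> t i \<noteq> None \<longleftrightarrow> i \<le> t)"
proof (induction t)
  case (Suc t)
  obtain A B Z where \<omega>: "\<omega> = (A, B, Z)" by (cases \<omega>)
  have "{j. new_label A Z (origin \<omega> t) t j} = (if A (t, Suc t) then {Suc t} else {})"
    using new_label_on_segment[of "origin \<omega> t" t A Z] Suc by auto
  then have "dproc \<omega> (Suc t) = (step_origin A B Z t (origin \<omega> t) (label_count \<omega> t),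
      label_count \<omega> t + (if A (t, Suc t) then 1 else 0))"
    using Suc by (cases "dproc \<omega> t") (simp add: origin_def \<omega>)
  then show ?case
    using step_origin_on_segment[of "origin \<omega> t" t A B Z] Suc
    by (auto simp: origin_def \<omega>)
qed (simp add: origin_def)

lemma origin_Suc:
  "origin \<omega> (Suc t) i =
    (if i = 0 then Some 0
     else if i \<le> t then (if fst (snd \<omega>) (t, i) then origin \<omega> t (i - 1) else origin \<omega> t i)
     else if i = Suc t then (if fst \<omega> (t, Suc t) then Some (label_count \<omega> t) else origin \<omega> t t)
     else None)"
proof -
  obtain A B Z where \<omega>: "\<omega> = (A, B, Z)" by (cases \<omega>)
  have "origin \<omega> (Suc t) = step_origin A B Z t (origin \<omega> t) (label_count \<omega> t)"
    using dproc_on_segment[of \<omega> t] by (auto simp: origin_def \<omega> split: prod.split)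
  then show ?thesis
    using step_origin_on_segment[of "origin \<omega> t" t A B Z] dproc_on_segment[of \<omega> t] by (simp add: \<omega>)
qed

lemma origin_lt_label_count: "origin \<omega> t i = Some j \<Longrightarrow> j < label_count \<omega> t"
proof (induction t arbitrary: i)
  case 0
  then show ?case by (simp add: origin_def split: if_splits)
next
  case (Suc t)
  then show ?case
    using label_count_pos[of \<omega> t] by (auto simp: origin_Suc split: if_splits intro: less_SucI)
qed

lemma origin_le_iff_front: "(\<exists>j. origin \<omega> t i = Some j \<and> j \<le> k) \<longleftrightarrow> i \<le> front \<omega> k t"
proof (induction t arbitrary: i)
  case 0
  then show ?case by (simp add: origin_def)
next
  case (Suc t)
  have tip: "k < label_count \<omega> t" if "front \<omega> k t < t"
  proof -
    obtain j where "origin \<omega> t t = Some j"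
      using dproc_on_segment[of \<omega> t] by auto
    with Suc.IH[of t] that origin_lt_label_count[of \<omega> t t j] show ?thesis by auto
  qed
  consider "i = 0" | "0 < i" "i \<le> t" | "i = Suc t" | "Suc t < i" by linarith
  then show ?case
  proof cases
    case 2
    then show ?thesis
      using Suc.IH[of i] Suc.IH[of "i - 1"] front_le[of \<omega> k t]
      by (cases "front \<omega> k t = t"; cases "i = Suc (front \<omega> k t)") (auto simp: origin_Suc)
  next
    case 3
    then show ?thesis
      using Suc.IH[of t] tip front_le[of \<omega> k t] by (cases "front \<omega> k t = t") (auto simp: origin_Suc)
  qed (use front_le[of \<omega> k "Suc t"] in \<open>auto simp: origin_Suc\<close>)
qed

lemma frontier_eq_front: "frontier \<omega> k t = front \<omega> k t"
proof -
  have "{i. \<exists>j. origin \<omega> t i = Some j \<and> j \<le> k} = {..front \<omega> k t}"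
    using origin_le_iff_front by auto
  then show ?thesis unfolding frontier_def by (simp add: Max_eq_iff)
qed

section \<open>Cylinder events of the decoupled space\<close>

lemma space_PiM_pmf [simp]: "space (PiM UNIV (\<lambda>_. measure_pmf q)) = UNIV"
  by (simp add: space_PiM)

lemma space_decoupled_space [simp]: "space (decoupled_space \<alpha> \<beta>) = UNIV"
  by (simp add: decoupled_space_def space_pair_measure)

lemma prob_space_decoupled_space: "prob_space (decoupled_space \<alpha> \<beta>)"
  unfolding decoupled_space_def
  by (intro prob_space_pair prob_space_PiM measure_pmf.prob_space_axioms)

lemma PiM_pmf_cylinder:
  fixes q :: "'b pmf" and J :: "'i set"
  assumes "finite J"
  shows "{f. \<forall>x\<in>J. f x = v x} \<in> sets (PiM UNIV (\<lambda>_. measure_pmf q))"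
    and "measure (PiM UNIV (\<lambda>_. measure_pmf q)) {f. \<forall>x\<in>J. f x = v x} = (\<Prod>x\<in>J. pmf q (v x))"
proof -
  interpret product_prob_space "\<lambda>_. measure_pmf q" UNIV
    by unfold_locales
  have cyl: "{f. \<forall>x\<in>J. f x = v x} = prod_emb UNIV (\<lambda>_. measure_pmf q) J (PiE J (\<lambda>x. {v x}))"
    by (auto simp: prod_emb_def PiE_iff)
  show "{f. \<forall>x\<in>J. f x = v x} \<in> sets (PiM UNIV (\<lambda>_. measure_pmf q))"
    unfolding cyl using assms by (intro sets_PiM_I) auto
  show "measure (PiM UNIV (\<lambda>_. measure_pmf q)) {f. \<forall>x\<in>J. f x = v x} = (\<Prod>x\<in>J. pmf q (v x))"
    unfolding cyl using assms by (simp add: measure_PiM_emb measure_pmf_single)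
qed

lemma measure_pair_measure_Times_space:
  assumes "prob_space N" "A \<in> sets M"
  shows "measure (M \<Otimes>\<^sub>M N) (A \<times> space N) = measure M A"
proof -
  interpret N: prob_space N by fact
  have "emeasure (M \<Otimes>\<^sub>M N) (A \<times> space N) = emeasure M A"
    using N.emeasure_pair_measure_Times[OF assms(2) sets.top] by (simp add: N.emeasure_space_1)
  then show ?thesis by (simp add: measure_def)
qed

lemma measure_pair_measure_space_Times:
  assumes "prob_space M" "sigma_finite_measure N" "B \<in> sets N"
  shows "measure (M \<Otimes>\<^sub>M N) (space M \<times> B) = measure N B"
proof -
  interpret M: prob_space M by fact
  have "emeasure (M \<Otimes>\<^sub>M N) (space M \<times> B) = emeasure N B"
    using sigma_finite_measure.emeasure_pair_measure_Times[OF assms(2) sets.top[of M] assms(3)]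
    by (simp add: M.emeasure_space_1)
  then show ?thesis by (simp add: measure_def)
qed

lemma label_cylinder:
  assumes "finite J"
  shows "{\<omega>. \<forall>x\<in>J. fst \<omega> x = v x} \<in> sets (decoupled_space \<alpha> \<beta>)"
    and "measure (decoupled_space \<alpha> \<beta>) {\<omega>. \<forall>x\<in>J. fst \<omega> x = v x} = (\<Prod>x\<in>J. pmf (bernoulli_pmf \<alpha>) (v x))"
proof -
  let ?A = "PiM UNIV (\<lambda>_::nat \<times> nat. measure_pmf (bernoulli_pmf \<alpha>))"
  let ?N = "PiM UNIV (\<lambda>_::nat \<times> nat. measure_pmf (bernoulli_pmf \<beta>))
    \<Otimes>\<^sub>M PiM UNIV (\<lambda>_::nat. measure_pmf (pmf_of_set (UNIV :: bool set)))"
  have N: "prob_space ?N"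
    by (intro prob_space_pair; intro prob_space_PiM measure_pmf.prob_space_axioms)
  have eq: "{\<omega> :: dp_omega. \<forall>x\<in>J. fst \<omega> x = v x} = {f. \<forall>x\<in>J. f x = v x} \<times> space ?N"
    unfolding space_pair_measure space_PiM_pmf UNIV_Times_UNIV by (rule set_eqI) (simp add: mem_Times_iff)
  have cyl: "{f. \<forall>x\<in>J. f x = v x} \<in> sets ?A"
    by (rule PiM_pmf_cylinder(1)[OF assms])
  show "{\<omega>. \<forall>x\<in>J. fst \<omega> x = v x} \<in> sets (decoupled_space \<alpha> \<beta>)"
    unfolding eq decoupled_space_def by (rule pair_measureI[OF cyl sets.top])
  show "measure (decoupled_space \<alpha> \<beta>) {\<omega>. \<forall>x\<in>J. fst \<omega> x = v x} = (\<Prod>x\<in>J. pmf (bernoulli_pmf \<alpha>) (v x))"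
    unfolding eq decoupled_space_def
    by (simp only: measure_pair_measure_Times_space[OF N cyl] PiM_pmf_cylinder(2)[OF assms])
qed

lemma copy_cylinder:
  assumes "finite J"
  shows "{\<omega>. \<forall>x\<in>J. fst (snd \<omega>) x = v x} \<in> sets (decoupled_space \<alpha> \<beta>)"
    and "measure (decoupled_space \<alpha> \<beta>) {\<omega>. \<forall>x\<in>J. fst (snd \<omega>) x = v x}
           = (\<Prod>x\<in>J. pmf (bernoulli_pmf \<beta>) (v x))"
proof -
  let ?A = "PiM UNIV (\<lambda>_::nat \<times> nat. measure_pmf (bernoulli_pmf \<alpha>))"
  let ?B = "PiM UNIV (\<lambda>_::nat \<times> nat. measure_pmf (bernoulli_pmf \<beta>))"
  let ?Z = "PiM UNIV (\<lambda>_::nat. measure_pmf (pmf_of_set (UNIV :: bool set)))"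
  have A: "prob_space ?A" and Z: "prob_space ?Z"
    by (intro prob_space_PiM measure_pmf.prob_space_axioms)+
  have BZ: "sigma_finite_measure (?B \<Otimes>\<^sub>M ?Z)"
    by (intro prob_space_imp_sigma_finite prob_space_pair; intro prob_space_PiM measure_pmf.prob_space_axioms)
  have cyl: "{f. \<forall>x\<in>J. f x = v x} \<in> sets ?B"
    by (rule PiM_pmf_cylinder(1)[OF assms])
  have cylZ: "{f. \<forall>x\<in>J. f x = v x} \<times> space ?Z \<in> sets (?B \<Otimes>\<^sub>M ?Z)"
    by (rule pair_measureI[OF cyl sets.top])
  have eq: "{\<omega> :: dp_omega. \<forall>x\<in>J. fst (snd \<omega>) x = v x} = space ?A \<times> ({f. \<forall>x\<in>J. f x = v x} \<times> space ?Z)"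
    unfolding space_PiM_pmf by (rule set_eqI) (simp add: mem_Times_iff)
  show "{\<omega>. \<forall>x\<in>J. fst (snd \<omega>) x = v x} \<in> sets (decoupled_space \<alpha> \<beta>)"
    unfolding eq decoupled_space_def by (rule pair_measureI[OF sets.top cylZ])
  show "measure (decoupled_space \<alpha> \<beta>) {\<omega>. \<forall>x\<in>J. fst (snd \<omega>) x = v x}
           = (\<Prod>x\<in>J. pmf (bernoulli_pmf \<beta>) (v x))"
    unfolding eq decoupled_space_def
    by (simp only: measure_pair_measure_space_Times[OF A BZ cylZ] measure_pair_measure_Times_space[OF Z cyl]
        PiM_pmf_cylinder(2)[OF assms])
qed

lemma sets_decoupled_space_finitely_determined:
  assumes "finite F"
    and determined: "\<And>\<omega> \<omega>'. \<forall>x\<in>F. fst \<omega> x = fst \<omega>' x \<and> fst (snd \<omega>) x = fst (snd \<omega>') x \<Longrightarrow>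
      \<omega> \<in> X \<Longrightarrow> \<omega>' \<in> X"
  shows "X \<in> sets (decoupled_space \<alpha> \<beta>)"
proof -
  define cyl where "cyl = (\<lambda>(a, b). {\<omega> :: dp_omega. \<forall>x\<in>F. fst \<omega> x = a x} \<inter> {\<omega>. \<forall>x\<in>F. fst (snd \<omega>) x = b x})"
  define trace where "trace = (\<lambda>\<omega> :: dp_omega. (restrict (fst \<omega>) F, restrict (fst (snd \<omega>)) F))"
  have "\<omega> \<in> cyl (trace \<omega>)" for \<omega>
    by (simp add: cyl_def trace_def)
  moreover have "\<omega>' \<in> X" if "\<omega> \<in> X" "\<omega>' \<in> cyl (trace \<omega>)" for \<omega> \<omega>'
    using that determined[of \<omega> \<omega>'] by (simp add: cyl_def trace_def)
  ultimately have X: "X = \<Union> (cyl ` trace ` X)"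
    by blast
  have "trace ` X \<subseteq> PiE F (\<lambda>_. UNIV) \<times> PiE F (\<lambda>_. UNIV)"
    by (auto simp: trace_def)
  then have "finite (trace ` X)"
    by (rule finite_subset) (intro finite_cartesian_product finite_PiE assms(1); simp)
  moreover have "cyl p \<in> sets (decoupled_space \<alpha> \<beta>)" for p
    unfolding cyl_def case_prod_beta using label_cylinder(1)[OF assms(1)] copy_cylinder(1)[OF assms(1)]
    by (rule sets.Int)
  ultimately show ?thesis
    by (subst X) (intro sets.finite_Union; auto)
qed

section \<open>Concentration of the lazy walk\<close>

lemma replicate_pmf_Suc_conv_pair_pmf:
  "replicate_pmf (Suc n) q = map_pmf (\<lambda>(x, xs). x # xs) (pair_pmf q (replicate_pmf n q))"
  by (simp add: pair_pmf_def map_bind_pmf bind_assoc_pmf bind_return_pmf)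

lemma pmf_replicate_pmf: "pmf (replicate_pmf (length xs) q) xs = (\<Prod>j<length xs. pmf q (xs ! j))"
proof (induction xs)
  case (Cons x xs)
  have "inj (\<lambda>(x, xs). x # xs :: 'a list)"
    by (auto intro: injI)
  then have "pmf (replicate_pmf (length (x # xs)) q) (x # xs) = pmf (pair_pmf q (replicate_pmf (length xs) q)) (x, xs)"
    unfolding length_Cons replicate_pmf_Suc_conv_pair_pmf by (metis (no_types) case_prod_conv pmf_map_inj')
  moreover have "(\<Prod>j<length (x # xs). pmf q ((x # xs) ! j)) = pmf q x * (\<Prod>j<length xs. pmf q (xs ! j))"
    by (simp only: length_Cons prod.lessThan_Suc_shift nth_Cons_0 nth_Cons_Suc)
  ultimately show ?case
    using Cons by (simp add: pmf_pair)
qed simp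

fun walk :: "dp_omega \<Rightarrow> nat \<Rightarrow> nat \<Rightarrow> nat \<Rightarrow> nat" where
  "walk \<omega> u x 0 = x"
| "walk \<omega> u x (Suc n) = walk \<omega> u x n + (if fst (snd \<omega>) (u + n, Suc (walk \<omega> u x n)) then 1 else 0)"

lemma walk_le: "walk \<omega> u x n \<le> x + n"
  by (induction n) auto

lemma front_eq_walk:
  assumes "front \<omega> k u = x" "x < u"
  shows "front \<omega> k (u + n) = walk \<omega> u x n"
proof (induction n)
  case (Suc n)
  moreover have "walk \<omega> u x n < u + n"
    using walk_le[of \<omega> u x n] assms(2) by simp
  ultimately show ?case
    by (simp add: add.commute)
qed (simp add: assms(1))

text \<open>The coin a walk reads depends on its current position, so it is not a sum of fixed coins.
  Its deviation event is instead a finite union of cylinders, one per coin sequence, each having the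
  probability of that sequence under n independent coin flips; this reduces it to a binomial tail.\<close>

definition path_cylinder :: "nat \<Rightarrow> nat \<Rightarrow> bool list \<Rightarrow> dp_omega set" where
  "path_cylinder u x bs =
     {\<omega>. \<forall>j<length bs. fst (snd \<omega>) (u + j, Suc (x + length (filter id (take j bs)))) = bs ! j}"

lemma path_cylinder:
  "path_cylinder u x bs \<in> sets (decoupled_space \<alpha> \<beta>)"
  "measure (decoupled_space \<alpha> \<beta>) (path_cylinder u x bs)
     = pmf (replicate_pmf (length bs) (bernoulli_pmf \<beta>)) bs"
proof -
  define pos where "pos j = (u + j, Suc (x + length (filter id (take j bs))))" for j
  have inj: "inj_on pos {..<length bs}"
    by (auto simp: pos_def inj_on_def)
  have eq: "path_cylinder u x bs = {\<omega>. \<forall>p\<in>pos ` {..<length bs}. fst (snd \<omega>) p = bs ! (fst p - u)}"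
    by (auto simp: path_cylinder_def pos_def)
  show "path_cylinder u x bs \<in> sets (decoupled_space \<alpha> \<beta>)"
    unfolding eq by (intro copy_cylinder(1)) simp
  have "measure (decoupled_space \<alpha> \<beta>) (path_cylinder u x bs)
      = (\<Prod>p\<in>pos ` {..<length bs}. pmf (bernoulli_pmf \<beta>) (bs ! (fst p - u)))"
    unfolding eq by (intro copy_cylinder(2)) simp
  also have "\<dots> = (\<Prod>j<length bs. pmf (bernoulli_pmf \<beta>) (bs ! j))"
    by (subst prod.reindex[OF inj]) (simp add: pos_def)
  also have "\<dots> = pmf (replicate_pmf (length bs) (bernoulli_pmf \<beta>)) bs"
    by (simp add: pmf_replicate_pmf)
  finally show "measure (decoupled_space \<alpha> \<beta>) (path_cylinder u x bs)
     = pmf (replicate_pmf (length bs) (bernoulli_pmf \<beta>)) bs" .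
qed

lemma walk_on_path_cylinder:
  assumes "\<omega> \<in> path_cylinder u x bs" "j \<le> length bs"
  shows "walk \<omega> u x j = x + length (filter id (take j bs))"
  using assms(2)
proof (induction j)
  case (Suc j)
  then have "fst (snd \<omega>) (u + j, Suc (x + length (filter id (take j bs)))) = bs ! j"
    using assms(1) by (simp add: path_cylinder_def)
  with Suc show ?case
    by (cases "bs ! j") (simp_all add: take_Suc_conv_app_nth id_def)
qed simp

definition walk_path :: "dp_omega \<Rightarrow> nat \<Rightarrow> nat \<Rightarrow> nat \<Rightarrow> bool list" where
  "walk_path \<omega> u x n = map (\<lambda>j. fst (snd \<omega>) (u + j, Suc (walk \<omega> u x j))) [0..<n]"

lemma walk_eq_walk_path:
  "j \<le> n \<Longrightarrow> walk \<omega> u x j = x + length (filter id (take j (walk_path \<omega> u x n)))"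
proof (induction j)
  case (Suc j)
  then have "take (Suc j) (walk_path \<omega> u x n)
      = take j (walk_path \<omega> u x n) @ [fst (snd \<omega>) (u + j, Suc (walk \<omega> u x j))]"
    by (simp add: take_Suc_conv_app_nth walk_path_def)
  with Suc show ?case
    by simp
qed simp

lemma in_path_cylinder_walk_path: "\<omega> \<in> path_cylinder u x (walk_path \<omega> u x n)"
  using walk_eq_walk_path[of _ n \<omega> u x] by (simp add: path_cylinder_def walk_path_def)

lemma walk_deviation_eq_Union_path_cylinder:
  fixes \<beta> d :: real
  shows "{\<omega>. d \<le> \<bar>real (walk \<omega> u x n) - real x - \<beta> * n\<bar>}
     = (\<Union>bs\<in>{bs. length bs = n \<and> d \<le> \<bar>real (length (filter id bs)) - \<beta> * n\<bar>}. path_cylinder u x bs)"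
proof (intro set_eqI iffI)
  fix \<omega> assume "\<omega> \<in> {\<omega>. d \<le> \<bar>real (walk \<omega> u x n) - real x - \<beta> * n\<bar>}"
  then show "\<omega> \<in> (\<Union>bs\<in>{bs. length bs = n \<and> d \<le> \<bar>real (length (filter id bs)) - \<beta> * n\<bar>}. path_cylinder u x bs)"
    using in_path_cylinder_walk_path[of \<omega> u x n] walk_eq_walk_path[of n n \<omega> u x]
    by (intro UN_I[of "walk_path \<omega> u x n"]) (auto simp: walk_path_def)
qed (auto dest: walk_on_path_cylinder[OF _ order_refl])

lemma walk_deviation:
  fixes \<beta> d :: real
  assumes "0 \<le> \<beta>" "\<beta> \<le> 1" "0 < n" "0 \<le> d"
  shows "{\<omega>. d \<le> \<bar>real (walk \<omega> u x n) - real x - \<beta> * n\<bar>} \<in> sets (decoupled_space \<alpha> \<beta>)"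
    and "measure (decoupled_space \<alpha> \<beta>) {\<omega>. d \<le> \<bar>real (walk \<omega> u x n) - real x - \<beta> * n\<bar>}
           \<le> 2 * exp (- 2 * d\<^sup>2 / n)"
proof -
  define Bad where "Bad = {bs. length bs = n \<and> d \<le> \<bar>real (length (filter id bs)) - \<beta> * n\<bar>}"
  define R where "R = replicate_pmf n (bernoulli_pmf \<beta>)"
  have "Bad \<subseteq> {bs. set bs \<subseteq> UNIV \<and> length bs = n}"
    by (auto simp: Bad_def)
  then have fin: "finite Bad"
    using finite_lists_length_eq[of UNIV n] by (rule finite_subset) simp
  have eq: "{\<omega>. d \<le> \<bar>real (walk \<omega> u x n) - real x - \<beta> * n\<bar>} = (\<Union>bs\<in>Bad. path_cylinder u x bs)"
    unfolding Bad_def by (rule walk_deviation_eq_Union_path_cylinder)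
  show "{\<omega>. d \<le> \<bar>real (walk \<omega> u x n) - real x - \<beta> * n\<bar>} \<in> sets (decoupled_space \<alpha> \<beta>)"
    unfolding eq using fin by (intro sets.finite_UN path_cylinder(1))
  have "measure (decoupled_space \<alpha> \<beta>) {\<omega>. d \<le> \<bar>real (walk \<omega> u x n) - real x - \<beta> * n\<bar>}
      \<le> (\<Sum>bs\<in>Bad. measure (decoupled_space \<alpha> \<beta>) (path_cylinder u x bs))"
    unfolding eq using fin by (intro measure_UNION_le path_cylinder(1))
  also have "\<dots> = measure_pmf.prob R Bad"
    using fin by (simp add: path_cylinder(2) measure_measure_pmf_finite Bad_def R_def)
  also have "\<dots> \<le> measure_pmf.prob R {bs. d \<le> \<bar>real (length (filter id bs)) - \<beta> * n\<bar>}"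
    by (rule measure_pmf.finite_measure_mono) (auto simp: Bad_def)
  also have "\<dots> = measure_pmf.prob (binomial_pmf n \<beta>) {k. \<bar>real k - real n * \<beta>\<bar> \<ge> d}"
    using assms by (simp add: binomial_pmf_altdef R_def mult.commute)
  also have "\<dots> \<le> 2 * exp (- 2 * d\<^sup>2 / n)"
    using assms by (intro binomial_distribution.prob_abs_ge) (auto simp: binomial_distribution_def)
  finally show "measure (decoupled_space \<alpha> \<beta>) {\<omega>. d \<le> \<bar>real (walk \<omega> u x n) - real x - \<beta> * n\<bar>}
           \<le> 2 * exp (- 2 * d\<^sup>2 / n)" .
qed

section \<open>Frontiers released by a fresh label\<close>

lemma front_eq_self_if_few_labels: "label_count \<omega> t \<le> Suc k \<Longrightarrow> front \<omega> k t = t"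
proof (induction t)
  case (Suc t)
  then have "front \<omega> k t = t"
    using label_count_mono[of t "Suc t" \<omega>] by simp
  with Suc.prems show ?case
    by auto
qed simp

lemma front_at_first_label:
  assumes "front \<omega> k \<tau> = \<tau>" "k < label_count \<omega> \<tau>"
    and "\<forall>j<a. \<not> fst \<omega> (\<tau> + j, Suc (\<tau> + j))" "fst \<omega> (\<tau> + a, Suc (\<tau> + a))"
  shows "front \<omega> k (Suc (\<tau> + a)) = \<tau> + a"
proof -
  have "front \<omega> k (\<tau> + j) = \<tau> + j" if "j \<le> a" for j
    using that by (induction j) (use assms(1,3) in auto)
  moreover have "k < label_count \<omega> (\<tau> + a)"
    using assms(2) label_count_mono[of \<tau> "\<tau> + a" \<omega>] by simp
  ultimately show ?thesis
    using assms(4) by simp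
qed

lemma frontier_eq_walk_after_label:
  assumes "fst \<omega> (\<tau> + a, Suc (\<tau> + a))" "\<forall>j<a. \<not> fst \<omega> (\<tau> + j, Suc (\<tau> + j))" "\<tau> + a < t"
  shows "frontier \<omega> (label_count \<omega> \<tau> - 1) t = walk \<omega> (Suc (\<tau> + a)) (\<tau> + a) (t - Suc (\<tau> + a))"
proof -
  let ?k = "label_count \<omega> \<tau> - 1"
  have "front \<omega> ?k \<tau> = \<tau>" "?k < label_count \<omega> \<tau>"
    using label_count_pos[of \<omega> \<tau>] by (auto intro: front_eq_self_if_few_labels)
  then have "front \<omega> ?k (Suc (\<tau> + a)) = \<tau> + a"
    using assms(2,1) by (rule front_at_first_label)
  then have "front \<omega> ?k (Suc (\<tau> + a) + (t - Suc (\<tau> + a))) = walk \<omega> (Suc (\<tau> + a)) (\<tau> + a) (t - Suc (\<tau> + a))"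
    by (rule front_eq_walk) simp
  then show ?thesis
    using assms(3) by (simp add: frontier_eq_front)
qed

lemma label_count_less:
  assumes "fst \<omega> (m, Suc m)" "\<tau> \<le> m" "m < \<tau>'"
  shows "label_count \<omega> \<tau> < label_count \<omega> \<tau>'"
proof -
  have "label_count \<omega> \<tau> \<le> label_count \<omega> m"
    using assms(2) by (rule label_count_mono)
  also have "\<dots> < label_count \<omega> (Suc m)"
    using assms(1) by simp
  also have "\<dots> \<le> label_count \<omega> \<tau>'"
    using assms(3) by (intro label_count_mono) simp
  finally show ?thesis .
qed

lemma front_cong:
  assumes "\<forall>u<t. \<forall>i\<le>Suc u. fst \<omega> (u, i) = fst \<omega>' (u, i) \<and> fst (snd \<omega>) (u, i) = fst (snd \<omega>') (u, i)"
  shows "front \<omega> k t = front \<omega>' k t"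
proof -
  have "label_count \<omega> t = label_count \<omega>' t \<and> front \<omega> k t = front \<omega>' k t"
    using assms
  proof (induction t)
    case (Suc t)
    then show ?case
      using front_le[of \<omega> k t] by auto
  qed simp
  then show ?thesis ..
qed

lemma no_label_window:
  "{\<omega>. \<forall>j\<le>w. \<not> fst \<omega> (\<tau> + j, Suc (\<tau> + j))} \<in> sets (decoupled_space \<alpha> \<beta>)"
  "0 \<le> \<alpha> \<Longrightarrow> \<alpha> \<le> 1 \<Longrightarrow>
     measure (decoupled_space \<alpha> \<beta>) {\<omega>. \<forall>j\<le>w. \<not> fst \<omega> (\<tau> + j, Suc (\<tau> + j))} = (1 - \<alpha>) ^ Suc w"
proof -
  let ?J = "(\<lambda>j. (\<tau> + j, Suc (\<tau> + j))) ` {..w}"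
  have eq: "{\<omega>. \<forall>j\<le>w. \<not> fst \<omega> (\<tau> + j, Suc (\<tau> + j))} = {\<omega>. \<forall>x\<in>?J. fst \<omega> x = False}"
    by auto
  show "{\<omega>. \<forall>j\<le>w. \<not> fst \<omega> (\<tau> + j, Suc (\<tau> + j))} \<in> sets (decoupled_space \<alpha> \<beta>)"
    unfolding eq by (intro label_cylinder(1)) simp
  assume "0 \<le> \<alpha>" "\<alpha> \<le> 1"
  then show "measure (decoupled_space \<alpha> \<beta>) {\<omega>. \<forall>j\<le>w. \<not> fst \<omega> (\<tau> + j, Suc (\<tau> + j))} = (1 - \<alpha>) ^ Suc w"
    unfolding eq by (subst label_cylinder(2)) (auto simp: card_image inj_on_def)
qed

definition spread_frontiers :: "real \<Rightarrow> real \<Rightarrow> real \<Rightarrow> real \<Rightarrow> real \<Rightarrow> nat \<Rightarrow> (nat \<Rightarrow> nat) \<Rightarrow> bool" where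
  "spread_frontiers C K L \<beta> c t \<sigma> \<longleftrightarrow>
     (\<exists>l :: nat. real l \<ge> L * real t powr (1/2 - c) \<and>
        (\<exists>k :: nat \<Rightarrow> nat. strict_mono_on {..l} k \<and> inj_on (\<lambda>i. \<sigma> (k i)) {..l} \<and>
           (\<forall>i \<le> l. \<bar>real (\<sigma> (k i)) - \<beta> * real t - C * real t powr c * sqrt (real t) * real i\<bar>
                      \<le> K * real t powr c * sqrt (real t))))"

lemma sets_spread_frontiers:
  "{\<omega> \<in> space (decoupled_space \<alpha> \<beta>). spread_frontiers C K L \<beta> c t (\<lambda>k. frontier \<omega> k t)}
     \<in> sets (decoupled_space \<alpha> \<beta>)"
proof (rule sets_decoupled_space_finitely_determined)
  show "finite {(u, i). u < t \<and> i \<le> Suc u}"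
    by (rule finite_subset[of _ "{..t} \<times> {..Suc t}"]) auto
next
  fix \<omega> \<omega>' :: dp_omega
  assume "\<forall>x\<in>{(u, i). u < t \<and> i \<le> Suc u}. fst \<omega> x = fst \<omega>' x \<and> fst (snd \<omega>) x = fst (snd \<omega>') x"
  then have "(\<lambda>k. frontier \<omega> k t) = (\<lambda>k. frontier \<omega>' k t)"
    by (intro ext) (simp add: frontier_eq_front front_cong)
  then show "\<omega> \<in> {\<omega> \<in> space (decoupled_space \<alpha> \<beta>). spread_frontiers C K L \<beta> c t (\<lambda>k. frontier \<omega> k t)} \<Longrightarrow>
      \<omega>' \<in> {\<omega> \<in> space (decoupled_space \<alpha> \<beta>). spread_frontiers C K L \<beta> c t (\<lambda>k. frontier \<omega> k t)}"
    by simp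
qed

section \<open>Well separated frontiers at a fixed time\<close>

locale frontier_schedule =
  fixes \<beta> c :: real and t :: nat
  assumes \<beta>: "0 < \<beta>" "\<beta> < 1"
    and scale_ge_8: "8 \<le> real t powr (c + 1/2)"
    and room: "(3 / (1 - \<beta>) + 1/4) * real t powr (c + 1/2) + 2 \<le> real t / 2"
begin

definition scale :: real where
  "scale = real t powr (c + 1/2)"

definition spacing :: real where
  "spacing = 3 * scale / (1 - \<beta>)"

definition window :: nat where
  "window = nat \<lfloor>scale / 4\<rfloor>"

definition blocks :: nat where
  "blocks = nat \<lceil>(1 - \<beta>) / 6 * real t powr (1/2 - c)\<rceil>"

definition start :: "nat \<Rightarrow> nat" where
  "start i = nat \<lfloor>real i * spacing\<rfloor>"

definition missed_label :: "nat \<Rightarrow> dp_omega set" where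
  "missed_label i = {\<omega>. \<forall>j\<le>window. \<not> fst \<omega> (start i + j, Suc (start i + j))}"

definition walk_deviates :: "nat \<Rightarrow> nat \<Rightarrow> dp_omega set" where
  "walk_deviates i a = {\<omega>. scale \<le> \<bar>real (walk \<omega> (Suc (start i + a)) (start i + a) (t - Suc (start i + a)))
      - real (start i + a) - \<beta> * real (t - Suc (start i + a))\<bar>}"

definition bad :: "dp_omega set" where
  "bad = (\<Union>i\<le>blocks. missed_label i \<union> (\<Union>a\<le>window. walk_deviates i a))"

lemma scale_ge: "8 \<le> scale"
  using scale_ge_8 by (simp add: scale_def)

lemma t_pos: "0 < t"
  using scale_ge_8 by (cases "t = 0") auto

lemma scale_eq: "real t powr c * sqrt (real t) = scale"
  using t_pos by (simp add: scale_def powr_add powr_half_sqrt)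

lemma scale_squared: "scale\<^sup>2 / real t = real t powr (2 * c)"
proof -
  have "scale\<^sup>2 = real t powr (2 * c + 1)"
    unfolding scale_def power2_eq_square powr_add[symmetric] by (simp add: algebra_simps)
  also have "\<dots> = real t powr (2 * c) * real t"
    using t_pos by (simp add: powr_add)
  finally have "scale\<^sup>2 = real t powr (2 * c) * real t" .
  then show ?thesis
    using t_pos by simp
qed

lemma spacing: "(1 - \<beta>) * spacing = 3 * scale" "3 * scale \<le> spacing"
proof -
  show eq: "(1 - \<beta>) * spacing = 3 * scale"
    using \<beta> by (simp add: spacing_def)
  have "0 \<le> spacing"
    using \<beta> scale_ge by (simp add: spacing_def)
  then have "(1 - \<beta>) * spacing \<le> 1 * spacing"
    using \<beta> by (intro mult_right_mono) auto
  then show "3 * scale \<le> spacing"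
    using eq by simp
qed

lemma window: "real window \<le> scale / 4" "scale / 4 < real window + 1"
  using scale_ge unfolding window_def by linarith+

lemma blocks_ge: "(1 - \<beta>) / 6 * real t powr (1/2 - c) \<le> real blocks"
  unfolding blocks_def by (rule real_nat_ceiling_ge)

lemma blocks_spacing: "real blocks * spacing \<le> real t / 2 + spacing"
proof -
  define X where "X = (1 - \<beta>) / 6 * real t powr (1/2 - c)"
  have "0 \<le> X"
    using \<beta> by (simp add: X_def)
  then have "real blocks \<le> X + 1"
    unfolding blocks_def X_def[symmetric] by linarith
  then have "real blocks * spacing \<le> (X + 1) * spacing"
    using spacing(2) scale_ge by (intro mult_right_mono) auto
  also have "\<dots> = real t / 2 + spacing"
  proof -
    have "X * spacing = real t / 2"
      using \<beta> t_pos by (simp add: X_def spacing_def scale_def field_simps flip: powr_add)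
    then show ?thesis
      by (simp add: distrib_right)
  qed
  finally show ?thesis .
qed

lemma start_le: "real (start i) \<le> real i * spacing"
  and start_gt: "real i * spacing - 1 < real (start i)"
proof -
  have "0 \<le> real i * spacing"
    using spacing(2) scale_ge by simp
  then show "real (start i) \<le> real i * spacing" "real i * spacing - 1 < real (start i)"
    unfolding start_def by linarith+
qed

lemma start_window_le: "i \<le> blocks \<Longrightarrow> start i + window + 2 \<le> t"
proof -
  assume "i \<le> blocks"
  then have "real i * spacing \<le> real blocks * spacing"
    using spacing(2) scale_ge by (intro mult_right_mono) auto
  then have "real (start i) + real window + 2 \<le> real t"
    using start_le[of i] blocks_spacing window(1) room
    by (simp add: scale_def spacing_def algebra_simps)
  then show ?thesis
    by linarith
qed

lemma start_gap: "i < j \<Longrightarrow> start i + window < start j"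
proof -
  assume "i < j"
  then have "(real i + 1) * spacing \<le> real j * spacing"
    using spacing(2) scale_ge by (intro mult_right_mono) auto
  then have "real (start i) + real window < real (start j)"
    using start_le[of i] start_gt[of j] window(1) spacing(2) scale_ge by (simp add: distrib_right)
  then show ?thesis
    by linarith
qed

lemma window_le: "window \<le> t"
proof -
  have "0 \<le> 3 / (1 - \<beta>) * scale"
    using \<beta> scale_ge by simp
  then have "real window \<le> real t"
    using window(1) room by (simp add: scale_def algebra_simps)
  then show ?thesis
    by simp
qed

lemma blocks_le: "blocks \<le> t"
proof -
  have "spacing \<le> real t / 2"
    using room scale_ge by (simp add: spacing_def scale_def algebra_simps)
  moreover have "real blocks \<le> real blocks * spacing"
    using spacing(2) scale_ge by (simp add: mult_le_cancel_left1)
  ultimately have "real blocks \<le> real t"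
    using blocks_spacing by linarith
  then show ?thesis
    by simp
qed

lemma walk_deviates:
  assumes "i \<le> blocks" "a \<le> window"
  shows "walk_deviates i a \<in> sets (decoupled_space \<alpha> \<beta>)"
    and "measure (decoupled_space \<alpha> \<beta>) (walk_deviates i a) \<le> 2 * exp (- 2 * real t powr (2 * c))"
proof -
  let ?n = "t - Suc (start i + a)"
  have n: "0 < ?n" "real ?n \<le> real t"
    using start_window_le[OF assms(1)] assms(2) by auto
  show "walk_deviates i a \<in> sets (decoupled_space \<alpha> \<beta>)"
    unfolding walk_deviates_def using \<beta> n scale_ge by (intro walk_deviation(1)) auto
  have "measure (decoupled_space \<alpha> \<beta>) (walk_deviates i a) \<le> 2 * exp (- 2 * scale\<^sup>2 / ?n)"
    unfolding walk_deviates_def using \<beta> n scale_ge by (intro walk_deviation(2)) auto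
  also have "\<dots> \<le> 2 * exp (- 2 * real t powr (2 * c))"
  proof -
    have "scale\<^sup>2 / real t \<le> scale\<^sup>2 / ?n"
      using n by (intro divide_left_mono) auto
    then show ?thesis
      by (simp add: scale_squared)
  qed
  finally show "measure (decoupled_space \<alpha> \<beta>) (walk_deviates i a) \<le> 2 * exp (- 2 * real t powr (2 * c))" .
qed

lemma missed_label:
  assumes "0 \<le> \<alpha>" "\<alpha> < 1"
  shows "missed_label i \<in> sets (decoupled_space \<alpha> \<beta>)"
    and "measure (decoupled_space \<alpha> \<beta>) (missed_label i) \<le> exp (ln (1 - \<alpha>) * scale / 4)"
proof -
  show "missed_label i \<in> sets (decoupled_space \<alpha> \<beta>)"
    unfolding missed_label_def by (rule no_label_window(1))
  have "measure (decoupled_space \<alpha> \<beta>) (missed_label i) = exp (ln (1 - \<alpha>)) ^ Suc window"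
    unfolding missed_label_def using assms by (simp add: no_label_window(2))
  also have "\<dots> = exp (real (Suc window) * ln (1 - \<alpha>))"
    by (rule exp_of_nat_mult[symmetric])
  also have "\<dots> \<le> exp (ln (1 - \<alpha>) * scale / 4)"
  proof -
    have "ln (1 - \<alpha>) \<le> 0"
      using assms by simp
    then have "real (Suc window) * ln (1 - \<alpha>) \<le> scale / 4 * ln (1 - \<alpha>)"
      using window(2) by (intro mult_right_mono_neg) auto
    then show ?thesis
      by (simp add: mult.commute)
  qed
  finally show "measure (decoupled_space \<alpha> \<beta>) (missed_label i) \<le> exp (ln (1 - \<alpha>) * scale / 4)" .
qed

lemma measure_bad_le:
  assumes "0 \<le> \<alpha>" "\<alpha> < 1"
  shows "bad \<in> sets (decoupled_space \<alpha> \<beta>)"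
    and "measure (decoupled_space \<alpha> \<beta>) bad \<le> (real t + 1) * exp (ln (1 - \<alpha>) * scale / 4)
           + 2 * (real t + 1)\<^sup>2 * exp (- 2 * real t powr (2 * c))"
proof -
  let ?M = "decoupled_space \<alpha> \<beta>"
  let ?p = "exp (ln (1 - \<alpha>) * scale / 4)" and ?q = "2 * exp (- 2 * real t powr (2 * c))"
  have sets: "missed_label i \<union> (\<Union>a\<le>window. walk_deviates i a) \<in> sets ?M" if "i \<le> blocks" for i
    using that missed_label(1)[OF assms] walk_deviates(1) by auto
  then show "bad \<in> sets ?M"
    unfolding bad_def by auto
  have "measure ?M (missed_label i \<union> (\<Union>a\<le>window. walk_deviates i a)) \<le> ?p + (real t + 1) * ?q"
    if "i \<le> blocks" for i
  proof -
    have deviates: "(\<Union>a\<le>window. walk_deviates i a) \<in> sets ?M"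
      using that walk_deviates(1) by auto
    have "measure ?M (missed_label i \<union> (\<Union>a\<le>window. walk_deviates i a))
        \<le> measure ?M (missed_label i) + measure ?M (\<Union>a\<le>window. walk_deviates i a)"
      using missed_label(1)[OF assms] deviates by (rule measure_Un_le)
    also have "measure ?M (\<Union>a\<le>window. walk_deviates i a) \<le> (\<Sum>a\<le>window. measure ?M (walk_deviates i a))"
      using that walk_deviates(1) by (intro measure_UNION_le) auto
    also have "\<dots> \<le> (\<Sum>a\<le>window. ?q)"
      using that walk_deviates(2) by (intro sum_mono) auto
    also have "\<dots> \<le> (real t + 1) * ?q"
      using window_le by (simp add: mult_right_mono)
    finally show ?thesis
      using missed_label(2)[OF assms, of i] by simp
  qed
  then have "measure ?M bad \<le> (\<Sum>i\<le>blocks. ?p + (real t + 1) * ?q)"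
    unfolding bad_def using sets by (intro measure_UNION_le[THEN order_trans] sum_mono) auto
  also have "\<dots> \<le> (real t + 1) * (?p + (real t + 1) * ?q)"
    using blocks_le by (simp add: mult_right_mono)
  finally show "measure ?M bad \<le> (real t + 1) * ?p + 2 * (real t + 1)\<^sup>2 * exp (- 2 * real t powr (2 * c))"
    by (simp add: algebra_simps power2_eq_square)
qed

lemma first_label_in_window:
  assumes "\<omega> \<notin> bad" "i \<le> blocks"
  obtains a where "a \<le> window" "fst \<omega> (start i + a, Suc (start i + a))"
    "\<forall>j<a. \<not> fst \<omega> (start i + j, Suc (start i + j))"
proof -
  have "\<exists>j\<le>window. fst \<omega> (start i + j, Suc (start i + j))"
    using assms unfolding bad_def missed_label_def by auto
  then obtain j where "j \<le> window" "fst \<omega> (start i + j, Suc (start i + j))"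
    by blast
  then show ?thesis
    using that[of "LEAST j. fst \<omega> (start i + j, Suc (start i + j))"]
    by (metis (mono_tags, lifting) LeastI Least_le not_less_Least order_trans)
qed

lemma frontier_near_target:
  assumes "\<omega> \<notin> bad" "i \<le> blocks"
  shows "\<bar>real (frontier \<omega> (label_count \<omega> (start i) - 1) t) - \<beta> * real t - 3 * scale * real i\<bar>
           < 3/2 * scale"
proof -
  obtain a where a: "a \<le> window" "fst \<omega> (start i + a, Suc (start i + a))"
      "\<forall>j<a. \<not> fst \<omega> (start i + j, Suc (start i + j))"
    using first_label_in_window[OF assms] .
  define x where "x = start i + a"
  define n where "n = t - Suc x"
  have t: "real t = real x + 1 + real n"
    using start_window_le[OF assms(2)] a(1) by (simp add: x_def n_def)
  have "frontier \<omega> (label_count \<omega> (start i) - 1) t = walk \<omega> (Suc x) x n"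
    using frontier_eq_walk_after_label[OF a(2,3)] start_window_le[OF assms(2)] a(1)
    by (simp add: x_def n_def)
  moreover have "\<omega> \<notin> walk_deviates i a"
    using assms a(1) by (auto simp: bad_def)
  ultimately have D: "\<bar>real (frontier \<omega> (label_count \<omega> (start i) - 1) t) - real x - \<beta> * real n\<bar> < scale"
    by (simp add: walk_deviates_def x_def n_def)
  define E where "E = (1 - \<beta>) * (real x - real i * spacing)"
  have "E \<le> (1 - \<beta>) * (scale / 4)"
    unfolding E_def using \<beta> start_le[of i] window(1) a(1) by (intro mult_left_mono) (auto simp: x_def)
  also have "\<dots> \<le> scale / 4"
    using \<beta> scale_ge by (simp add: mult_le_cancel_right1)
  finally have E_le: "E \<le> scale / 4" .
  have "(1 - \<beta>) * (-1) \<le> E"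
    unfolding E_def using \<beta> start_gt[of i] by (intro mult_left_mono) (auto simp: x_def)
  then have E_ge: "-1 \<le> E"
    using \<beta> by simp
  have "real (frontier \<omega> (label_count \<omega> (start i) - 1) t) - \<beta> * real t - 3 * scale * real i
      = (real (frontier \<omega> (label_count \<omega> (start i) - 1) t) - real x - \<beta> * real n) + E - \<beta>"
    unfolding t E_def spacing(1)[symmetric] by (simp add: algebra_simps)
  then show ?thesis
    using D E_le E_ge \<beta> scale_ge unfolding abs_less_iff by linarith
qed

lemma spread_frontiers_outside_bad:
  assumes "\<omega> \<notin> bad"
  shows "spread_frontiers 3 (3/2) ((1 - \<beta>) / 6) \<beta> c t (\<lambda>k. frontier \<omega> k t)"
proof -
  define k where "k i = label_count \<omega> (start i) - 1" for i
  define F where "F i = frontier \<omega> (k i) t" for i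
  have near: "\<bar>real (F i) - \<beta> * real t - 3 * scale * real i\<bar> < 3/2 * scale" if "i \<le> blocks" for i
    using frontier_near_target[OF assms that] by (simp add: F_def k_def)
  have "k i < k j" if "i < j" "j \<le> blocks" for i j
  proof -
    have "i \<le> blocks"
      using that by simp
    then obtain a where "a \<le> window" "fst \<omega> (start i + a, Suc (start i + a))"
      using first_label_in_window[OF assms] by blast
    then have "label_count \<omega> (start i) < label_count \<omega> (start j)"
      using start_gap[OF that(1)] by (intro label_count_less[of \<omega> "start i + a"]) auto
    then show ?thesis
      using label_count_pos[of \<omega> "start i"] by (simp add: k_def)
  qed
  then have mono: "strict_mono_on {..blocks} k"
    by (intro strict_mono_onI) auto
  have "F i < F j" if "i < j" "j \<le> blocks" for i j
  proof -
    have "3 * scale * (real i + 1) \<le> 3 * scale * real j"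
      using that scale_ge by (intro mult_left_mono) auto
    then have "real (F i) < real (F j)"
      using near[of i, unfolded abs_less_iff] near[of j, unfolded abs_less_iff] that
      by (simp add: algebra_simps)
    then show ?thesis
      by simp
  qed
  then have "inj_on (\<lambda>i. frontier \<omega> (k i) t) {..blocks}"
    by (intro strict_mono_on_imp_inj_on strict_mono_onI) (auto simp: F_def)
  moreover have "\<bar>real (frontier \<omega> (k i) t) - \<beta> * real t - 3 * real t powr c * sqrt (real t) * real i\<bar>
      \<le> 3/2 * real t powr c * sqrt (real t)" if "i \<le> blocks" for i
  proof -
    have "\<bar>real (frontier \<omega> (k i) t) - \<beta> * real t - 3 * real t powr c * sqrt (real t) * real i\<bar>
        < 3/2 * real t powr c * sqrt (real t)"
      using near[OF that] by (simp add: F_def scale_eq[symmetric] mult.assoc)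
    then show ?thesis
      by (rule less_imp_le)
  qed
  ultimately show ?thesis
    unfolding spread_frontiers_def using blocks_ge mono by blast
qed

lemma prob_spread_frontiers:
  assumes "0 \<le> \<alpha>" "\<alpha> < 1"
    and small: "(real t + 1) * exp (ln (1 - \<alpha>) * real t powr (c + 1/2) / 4)
      + 2 * (real t + 1)\<^sup>2 * exp (- 2 * real t powr (2 * c)) \<le> exp (- (real t powr (2 * c)))"
  shows "1 - exp (- (real t powr (2 * c))) \<le> measure (decoupled_space \<alpha> \<beta>)
    {\<omega> \<in> space (decoupled_space \<alpha> \<beta>). spread_frontiers 3 (3/2) ((1 - \<beta>) / 6) \<beta> c t (\<lambda>k. frontier \<omega> k t)}"
proof -
  let ?M = "decoupled_space \<alpha> \<beta>"
  interpret prob_space ?M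
    by (rule prob_space_decoupled_space)
  have "1 - exp (- (real t powr (2 * c))) \<le> 1 - measure ?M bad"
    using measure_bad_le(2)[OF assms(1,2)] small by (simp add: scale_def)
  also have "\<dots> = measure ?M (space ?M - bad)"
    using measure_bad_le(1)[OF assms(1,2)] by (rule prob_compl[symmetric])
  also have "\<dots> \<le> measure ?M {\<omega> \<in> space ?M. spread_frontiers 3 (3/2) ((1 - \<beta>) / 6) \<beta> c t (\<lambda>k. frontier \<omega> k t)}"
    using spread_frontiers_outside_bad sets_spread_frontiers by (intro finite_measure_mono) auto
  finally show ?thesis .
qed

end

definition large_time :: "real \<Rightarrow> real \<Rightarrow> real \<Rightarrow> nat \<Rightarrow> bool" where
  "large_time \<alpha> \<beta> c t \<longleftrightarrow> frontier_schedule \<beta> c t \<and>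
     (real t + 1) * exp (ln (1 - \<alpha>) * real t powr (c + 1/2) / 4)
       + 2 * (real t + 1)\<^sup>2 * exp (- 2 * real t powr (2 * c)) \<le> exp (- (real t powr (2 * c)))"

lemma eventually_large_time:
  fixes \<alpha> \<beta> c :: real
  assumes "0 < \<alpha>" "\<alpha> < 1" "0 < \<beta>" "\<beta> < 1" "0 < c" "c < 1/2"
  shows "eventually (large_time \<alpha> \<beta> c) sequentially"
proof -
  define q where "q = - ln (1 - \<alpha>)"
  have "0 < q"
    using assms(1,2) by (simp add: q_def)
  then have "(\<lambda>t. (real t + 1) * exp (- q * real t powr (c + 1/2) / 4) / exp (- (real t powr (2 * c))))
      \<longlonglongrightarrow> 0"
    using assms(5,6) by real_asymp
  then have labels: "eventually (\<lambda>t. (real t + 1) * exp (- q * real t powr (c + 1/2) / 4)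
      / exp (- (real t powr (2 * c))) < 1/2) sequentially"
    by (rule order_tendstoD(2)) simp
  have "(\<lambda>t. (real t + 1)\<^sup>2 * exp (- 2 * real t powr (2 * c)) / exp (- (real t powr (2 * c)))) \<longlonglongrightarrow> 0"
    using assms(5,6) by real_asymp
  then have walks: "eventually (\<lambda>t. (real t + 1)\<^sup>2 * exp (- 2 * real t powr (2 * c))
      / exp (- (real t powr (2 * c))) < 1/4) sequentially"
    by (rule order_tendstoD(2)) simp
  have "(\<lambda>t. ((3 / (1 - \<beta>) + 1/4) * real t powr (c + 1/2) + 2) / real t) \<longlonglongrightarrow> 0"
    using assms(5,6) by real_asymp
  then have room: "eventually (\<lambda>t. ((3 / (1 - \<beta>) + 1/4) * real t powr (c + 1/2) + 2) / real t < 1/2)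
      sequentially"
    by (rule order_tendstoD(2)) simp
  have "filterlim (\<lambda>t. real t powr (c + 1/2)) at_top sequentially"
    using assms(5,6) by real_asymp
  then have scale: "eventually (\<lambda>t. 8 \<le> real t powr (c + 1/2)) sequentially"
    by (simp add: filterlim_at_top)
  from labels walks room scale eventually_gt_at_top[of 0] show ?thesis
  proof eventually_elim
    case (elim t)
    then show ?case
      using assms(3,4) by (auto simp: large_time_def frontier_schedule_def q_def divide_less_eq)
  qed
qed

lemma spread_frontiers_with_high_probability:
  fixes \<alpha> \<beta> c :: real
  assumes "0 < \<alpha>" "\<alpha> < 1" "0 < \<beta>" "\<beta> < 1" "0 < c" "c < 1/2"
  shows "\<exists>\<epsilon> :: nat \<Rightarrow> real. \<epsilon> \<longlonglongrightarrow> 0 \<and> (\<forall>t. 1 - exp (- (1 + \<epsilon> t) * real t powr (2 * c))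
    \<le> measure (decoupled_space \<alpha> \<beta>) {\<omega> \<in> space (decoupled_space \<alpha> \<beta>).
         spread_frontiers 3 (3/2) ((1 - \<beta>) / 6) \<beta> c t (\<lambda>k. frontier \<omega> k t)})"
proof -
  \<comment> \<open>For small t the bound is made trivial by \<epsilon> t = -1.\<close>
  define \<epsilon> :: "nat \<Rightarrow> real" where "\<epsilon> t = (if large_time \<alpha> \<beta> c t then 0 else -1)" for t
  have "\<epsilon> \<longlonglongrightarrow> 0"
    using eventually_large_time[OF assms]
    by (intro tendsto_eventually) (auto simp: \<epsilon>_def elim: eventually_mono)
  moreover have "1 - exp (- (1 + \<epsilon> t) * real t powr (2 * c)) \<le> measure (decoupled_space \<alpha> \<beta>)
      {\<omega> \<in> space (decoupled_space \<alpha> \<beta>). spread_frontiers 3 (3/2) ((1 - \<beta>) / 6) \<beta> c t (\<lambda>k. frontier \<omega> k t)}"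
    for t
  proof (cases "large_time \<alpha> \<beta> c t")
    case True
    then show ?thesis
      using frontier_schedule.prob_spread_frontiers[of \<beta> c t \<alpha>] assms(1,2)
      by (simp add: \<epsilon>_def large_time_def)
  qed (simp add: \<epsilon>_def)
  ultimately show ?thesis
    by blast
qed

theorem mainTheorem7:
  fixes \<beta> :: real
  assumes "0 < \<beta>" and "\<beta> < 1"
  shows "\<exists>C\<^sub>\<beta> > 0. \<forall>\<alpha> c :: real. 0 < \<alpha> \<and> \<alpha> < 1 \<and> 0 < c \<and> c < 1/2 \<longrightarrow>
    (\<exists>K > 0. \<exists>L > 0. \<exists>\<epsilon> :: nat \<Rightarrow> real. \<epsilon> \<longlonglongrightarrow> 0 \<and>
      (\<forall>t :: nat.
        measure (decoupled_space \<alpha> \<beta>)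
          {\<omega> \<in> space (decoupled_space \<alpha> \<beta>).
             \<exists>l :: nat. real l \<ge> L * real t powr (1/2 - c) \<and>
               (\<exists>k :: nat \<Rightarrow> nat. strict_mono_on {..l} k \<and>
                  inj_on (\<lambda>i. frontier \<omega> (k i) t) {..l} \<and>
                  (\<forall>i \<le> l. \<bar>real (frontier \<omega> (k i) t) - \<beta> * real t
                              - C\<^sub>\<beta> * real t powr c * sqrt (real t) * real i\<bar>
                           \<le> K * real t powr c * sqrt (real t)))}
        \<ge> 1 - exp (- (1 + \<epsilon> t) * real t powr (2 * c))))"
proof (rule exI[of _ 3], intro conjI allI impI)
  fix \<alpha> c :: real
  assume "0 < \<alpha> \<and> \<alpha> < 1 \<and> 0 < c \<and> c < 1/2"
  then obtain \<epsilon> :: "nat \<Rightarrow> real" where "\<epsilon> \<longlonglongrightarrow> 0" and "\<forall>t. 1 - exp (- (1 + \<epsilon> t) * real t powr (2 * c))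
      \<le> measure (decoupled_space \<alpha> \<beta>) {\<omega> \<in> space (decoupled_space \<alpha> \<beta>).
           spread_frontiers 3 (3/2) ((1 - \<beta>) / 6) \<beta> c t (\<lambda>k. frontier \<omega> k t)}"
    using spread_frontiers_with_high_probability[of \<alpha> \<beta> c] assms by blast
  moreover have "(0::real) < 3/2" "0 < (1 - \<beta>) / 6"
    using assms by auto
  ultimately show "\<exists>K > 0. \<exists>L > 0. \<exists>\<epsilon> :: nat \<Rightarrow> real. \<epsilon> \<longlonglongrightarrow> 0 \<and>
      (\<forall>t :: nat.
        measure (decoupled_space \<alpha> \<beta>)
          {\<omega> \<in> space (decoupled_space \<alpha> \<beta>).
             \<exists>l :: nat. real l \<ge> L * real t powr (1/2 - c) \<and>
               (\<exists>k :: nat \<Rightarrow> nat. strict_mono_on {..l} k \<and>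
                  inj_on (\<lambda>i. frontier \<omega> (k i) t) {..l} \<and>
                  (\<forall>i \<le> l. \<bar>real (frontier \<omega> (k i) t) - \<beta> * real t
                              - 3 * real t powr c * sqrt (real t) * real i\<bar>
                           \<le> K * real t powr c * sqrt (real t)))}
        \<ge> 1 - exp (- (1 + \<epsilon> t) * real t powr (2 * c)))"
    unfolding spread_frontiers_def by blast
qed simp

end
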